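(* The Burgers transform does not preserve pointwise products: the identity $\mathcal{B}[f\cdot g](x,y) = \mathcal{B}[f](x,y) \cdot \mathcal{B}[g](x,y)$ fails in general at points with $x \neq 0$ (for holomorphic seeds $f,g$ with values in $\mathbb{C}_+$ whose product also takes values in $\mathbb{C}_+$).
   Context: $\mathbb{C}_+$ is the upper half-plane. For $U\subseteq\mathbb{C}$ open and connected with $U\cap\mathbb{R}$ containing an interval and $f\colon U\to\mathbb{C}_+$ holomorphic, the Burgers transform $\mathcal{B}[f]\colon\Omega_f\to\mathbb{C}_+$ is defined implicitly by $\mathcal{B}[f](x,y) = f(y - \mathcal{B}[f](x,y)\, x)$, where $\Omega_f \subseteq \mathbb{R}^2$ is the maximal open set on which this equation admits a unique $C^1$ solution with positive imaginary part. *)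

theory Defs
  imports "HOL-Analysis.Analysis"
begin

definition admissible_seed :: "complex set \<Rightarrow> (complex \<Rightarrow> complex) \<Rightarrow> bool" where
  "admissible_seed U f \<longleftrightarrow> open U \<and> connected U \<and>
     (\<exists>a b::real. a < b \<and> complex_of_real ` {a<..<b} \<subseteq> U) \<and>
     f holomorphic_on U \<and> (\<forall>z\<in>U. Im (f z) > 0)"

definition burgers_sol ::
  "complex set \<Rightarrow> (complex \<Rightarrow> complex) \<Rightarrow> (real \<times> real) set \<Rightarrow> (real \<times> real \<Rightarrow> complex) \<Rightarrow> bool" where
  "burgers_sol U f W u \<longleftrightarrow>
     (\<forall>p\<in>W. Im (u p) > 0 \<and>
            complex_of_real (snd p) - u p * complex_of_real (fst p) \<in> U \<and>
            u p = f (complex_of_real (snd p) - u p * complex_of_real (fst p))) \<and>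
     (\<exists>D :: real \<times> real \<Rightarrow> (real \<times> real) \<Rightarrow>\<^sub>L complex.
        (\<forall>p\<in>W. (u has_derivative blinfun_apply (D p)) (at p)) \<and> continuous_on W D)"

definition burgers_unique_on ::
  "complex set \<Rightarrow> (complex \<Rightarrow> complex) \<Rightarrow> (real \<times> real) set \<Rightarrow> (real \<times> real \<Rightarrow> complex) \<Rightarrow> bool" where
  "burgers_unique_on U f W u \<longleftrightarrow> open W \<and> burgers_sol U f W u \<and>
     (\<forall>v. burgers_sol U f W v \<longrightarrow> (\<forall>p\<in>W. v p = u p))"

definition burgers_domain ::
  "complex set \<Rightarrow> (complex \<Rightarrow> complex) \<Rightarrow> (real \<times> real) set \<Rightarrow> bool" where
  "burgers_domain U f \<Omega> \<longleftrightarrow> (\<exists>u. burgers_unique_on U f \<Omega> u) \<and>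
     (\<forall>W u. burgers_unique_on U f W u \<longrightarrow> W \<subseteq> \<Omega>)"

definition Omega_f :: "complex set \<Rightarrow> (complex \<Rightarrow> complex) \<Rightarrow> (real \<times> real) set" where
  "Omega_f U f = (THE \<Omega>. burgers_domain U f \<Omega>)"

text \<open>The Burgers transform: the unique solution on \<Omega>_f (values only meaningful on \<Omega>_f).\<close>
definition burgers :: "complex set \<Rightarrow> (complex \<Rightarrow> complex) \<Rightarrow> real \<Rightarrow> real \<Rightarrow> complex" where
  "burgers U f x y = (SOME u. burgers_unique_on U f (Omega_f U f) u) (x, y)"

end

theory Submission
  imports Defs
begin

text \<open>For an affine seed F z = a + b z the implicit equation u = F(y - u x) is linear in u,
  so its only solution is u(x,y) = (a + b y) / (1 + b x); the denominator cannot vanish when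
  Im a \<noteq> 0. Hence the Burgers transform of an affine seed is this explicit C^1 function on the
  set where it has positive imaginary part and keeps y - u x inside U. The seeds f = \<i> and
  g z = 1 + \<i> + z have the affine product f g z = (\<i> - 1) + \<i> z, and at (x,y) = (1/4, 0)
  the formula gives 4(-3 + 5\<i>)/17 for f g, but \<i> \<cdot> 4(1 + \<i>)/5 = 4(-1 + \<i>)/5 for the
  product of the transforms.\<close>

definition C1_on :: "'a::real_normed_vector set \<Rightarrow> ('a \<Rightarrow> 'b::real_normed_vector) \<Rightarrow> bool" where
  "C1_on V u \<longleftrightarrow> (\<exists>D. (\<forall>p\<in>V. (u has_derivative blinfun_apply (D p)) (at p)) \<and> continuous_on V D)"

lemma C1_on_subset: "C1_on V u \<Longrightarrow> W \<subseteq> V \<Longrightarrow> C1_on W u"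
  unfolding C1_on_def by (blast intro: continuous_on_subset)

lemma C1_on_imp_continuous_on: "C1_on V u \<Longrightarrow> open V \<Longrightarrow> continuous_on V u"
  unfolding C1_on_def
  by (metis continuous_at_imp_continuous_on has_derivative_continuous)

lemma C1_on_of_partials:
  fixes u :: "real \<times> real \<Rightarrow> 'a::real_normed_vector"
  assumes "\<And>p. p \<in> V \<Longrightarrow> (u has_derivative (\<lambda>h. fst h *\<^sub>R ux p + snd h *\<^sub>R uy p)) (at p)"
    and "continuous_on V ux" "continuous_on V uy"
  shows "C1_on V u"
  unfolding C1_on_def
proof (intro exI conjI ballI)
  let ?D = "\<lambda>p. (blinfun_scaleR_left (ux p) o\<^sub>L fst_blinfun) + (blinfun_scaleR_left (uy p) o\<^sub>L snd_blinfun)"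
  show "(u has_derivative blinfun_apply (?D p)) (at p)" if "p \<in> V" for p
    using assms(1)[OF that] by (simp add: plus_blinfun.rep_eq)
  show "continuous_on V ?D"
    using assms(2,3)
    by (intro continuous_on_blinfun_componentwise) (auto simp: Basis_prod_def blinfun.add_left)
qed

lemma burgers_sol_iff:
  "burgers_sol U f W u \<longleftrightarrow>
     (\<forall>p\<in>W. Im (u p) > 0 \<and>
            complex_of_real (snd p) - u p * complex_of_real (fst p) \<in> U \<and>
            u p = f (complex_of_real (snd p) - u p * complex_of_real (fst p))) \<and> C1_on W u"
  unfolding burgers_sol_def C1_on_def ..

lemma burgers_domain_unique:
  "burgers_domain U f \<Omega> \<Longrightarrow> burgers_domain U f \<Omega>' \<Longrightarrow> \<Omega> = \<Omega>'"
  unfolding burgers_domain_def by (metis subset_antisym)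

lemma Omega_f_eqI: "burgers_domain U f \<Omega> \<Longrightarrow> Omega_f U f = \<Omega>"
  unfolding Omega_f_def by (metis burgers_domain_unique the_equality)

lemma burgers_eqI:
  assumes "burgers_domain U f \<Omega>" "burgers_sol U f \<Omega> u" "p \<in> \<Omega>"
  shows "burgers U f (fst p) (snd p) = u p"
proof -
  let ?v = "SOME v. burgers_unique_on U f \<Omega> v"
  have "\<exists>v. burgers_unique_on U f \<Omega> v"
    using assms(1) unfolding burgers_domain_def by (rule conjunct1)
  then have "burgers_unique_on U f \<Omega> ?v"
    by (rule someI_ex)
  moreover have "u p = v p" if "burgers_unique_on U f \<Omega> v" for v
    using that assms(2,3) unfolding burgers_unique_on_def by simp
  ultimately have "u p = ?v p"
    by blast
  then show ?thesis
    using Omega_f_eqI[OF assms(1)] by (simp add: burgers_def)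
qed

locale burgers_solution_formula =
  fixes U :: "complex set" and f :: "complex \<Rightarrow> complex"
    and V :: "(real \<times> real) set" and u :: "real \<times> real \<Rightarrow> complex"
  assumes open_U: "open U" and open_V: "open V" and C1_u: "C1_on V u"
    and solves: "\<And>p. p \<in> V \<Longrightarrow> u p = f (of_real (snd p) - u p * of_real (fst p))"
    and solutions_are_u: "\<And>p w. Im w > 0 \<Longrightarrow> of_real (snd p) - w * of_real (fst p) \<in> U \<Longrightarrow>
        w = f (of_real (snd p) - w * of_real (fst p)) \<Longrightarrow> p \<in> V \<and> w = u p"
begin

definition solution_domain :: "(real \<times> real) set" where
  "solution_domain = {p\<in>V. Im (u p) > 0 \<and> of_real (snd p) - u p * of_real (fst p) \<in> U}"

lemma open_solution_domain: "open solution_domain"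
proof -
  have cont: "continuous_on V u"
    using C1_u open_V by (rule C1_on_imp_continuous_on)
  have "solution_domain =
      (V \<inter> u -` {w. Im w > 0}) \<inter> (V \<inter> (\<lambda>p. of_real (snd p) - u p * of_real (fst p)) -` U)"
    unfolding solution_domain_def by auto
  also have "open \<dots>"
  proof (rule open_Int)
    show "open (V \<inter> u -` {w. Im w > 0})"
      using cont open_V open_halfspace_Im_gt by (rule continuous_open_preimage)
    have "continuous_on V (\<lambda>p. of_real (snd p) - u p * of_real (fst p))"
      by (intro continuous_intros cont)
    then show "open (V \<inter> (\<lambda>p. of_real (snd p) - u p * of_real (fst p)) -` U)"
      using open_V open_U by (rule continuous_open_preimage)
  qed
  finally show ?thesis .
qed

lemma burgers_sol_solution_domain: "burgers_sol U f solution_domain u"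
  using solves C1_on_subset[OF C1_u]
  unfolding burgers_sol_iff solution_domain_def by auto

lemma burgers_sol_imp_subset_solution_domain:
  assumes "burgers_sol U f W v"
  shows "W \<subseteq> solution_domain \<and> (\<forall>p\<in>W. v p = u p)"
  using assms solutions_are_u unfolding burgers_sol_iff solution_domain_def by fastforce

lemma burgers_domain_solution_domain: "burgers_domain U f solution_domain"
  using open_solution_domain burgers_sol_solution_domain burgers_sol_imp_subset_solution_domain
  unfolding burgers_domain_def burgers_unique_on_def by metis

lemma burgers_eq_on_solution_domain: "p \<in> solution_domain \<Longrightarrow> burgers U f (fst p) (snd p) = u p"
  using burgers_eqI burgers_domain_solution_domain burgers_sol_solution_domain by blast

end

lemma has_derivative_affine_quotient:
  fixes a b :: complex
  assumes nz: "1 + b * of_real (fst p) \<noteq> 0"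
  shows "((\<lambda>p::real \<times> real. (a + b * of_real (snd p)) / (1 + b * of_real (fst p))) has_derivative
      (\<lambda>h. fst h *\<^sub>R (- b * (a + b * of_real (snd p)) / (1 + b * of_real (fst p))\<^sup>2)
         + snd h *\<^sub>R (b / (1 + b * of_real (fst p))))) (at p)"
  apply (rule has_derivative_eq_rhs)
   apply (rule derivative_eq_intros refl | simp add: nz)+
  apply (rule ext)
  using nz apply (simp add: scaleR_conv_of_real divide_simps power2_eq_square)
  apply algebra
  done

lemma affine_equation_denominator_nonzero:
  fixes a b w :: complex
  assumes "Im a \<noteq> 0" "w * (1 + b * of_real x) = a + b * of_real y"
  shows "1 + b * of_real x \<noteq> 0"
proof
  assume b: "1 + b * of_real x = 0"
  moreover have "a + b * of_real y = 0"
    using assms(2) b by simp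
  ultimately have "a * of_real x = of_real y"
    by algebra
  then have "Im a * x = 0" and "x \<noteq> 0"
    using b by (auto dest: arg_cong[of _ _ Im])
  with assms(1) show False
    by simp
qed

lemma burgers_affine_seed:
  fixes a b w :: complex
  assumes "open U" "Im a \<noteq> 0" and F: "\<And>z. F z = a + b * z"
    and w: "w * (1 + b * of_real x) = a + b * of_real y"
    and "Im w > 0" "of_real y - w * of_real x \<in> U"
  shows "(\<exists>\<Omega>. burgers_domain U F \<Omega>) \<and> (x, y) \<in> Omega_f U F \<and> burgers U F x y = w"
proof -
  define V where "V = {p::real \<times> real. 1 + b * of_real (fst p) \<noteq> 0}"
  define u where "u p = (a + b * of_real (snd p)) / (1 + b * of_real (fst p))" for p :: "real \<times> real"
  interpret burgers_solution_formula U F V u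
  proof
    show "open V"
      unfolding V_def by (intro open_Collect_neq continuous_intros)
    show "C1_on V u"
      unfolding u_def V_def
      by (rule C1_on_of_partials, rule has_derivative_affine_quotient, simp_all) (intro continuous_intros; simp)+
    show "u p = F (of_real (snd p) - u p * of_real (fst p))" if "p \<in> V" for p
      using that unfolding V_def u_def F by (simp add: field_simps)
    show "p \<in> V \<and> w = u p" if "w = F (of_real (snd p) - w * of_real (fst p))" for p w
    proof -
      from that have w: "w * (1 + b * of_real (fst p)) = a + b * of_real (snd p)"
        unfolding F by (simp add: algebra_simps)
      with assms(2) have "1 + b * of_real (fst p) \<noteq> 0"
        by (rule affine_equation_denominator_nonzero)
      with w show ?thesis
        unfolding V_def u_def by (simp add: field_simps)
    qed
  qed fact
  have "1 + b * of_real x \<noteq> 0"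
    using assms(2) w by (rule affine_equation_denominator_nonzero)
  then have "(x, y) \<in> V" "w = u (x, y)"
    using w by (simp_all add: V_def u_def field_simps)
  then have "(x, y) \<in> solution_domain"
    using assms(5,6) unfolding solution_domain_def by simp
  then show ?thesis
    using burgers_domain_solution_domain burgers_eq_on_solution_domain Omega_f_eqI \<open>w = u (x, y)\<close>
    by auto
qed

lemma admissible_seed_ball:
  assumes "r > 0" "F holomorphic_on ball 0 r" "\<And>z. z \<in> ball 0 r \<Longrightarrow> Im (F z) > 0"
  shows "admissible_seed (ball 0 r) F"
  unfolding admissible_seed_def
proof (intro conjI)
  show "\<exists>a b::real. a < b \<and> complex_of_real ` {a<..<b} \<subseteq> ball 0 r"
    using \<open>r > 0\<close> by (intro exI[of _ "-r"] exI[of _ r]) auto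
qed (use assms in auto)

lemma cmod_less_if_Re_Im: "\<bar>Re z\<bar> + \<bar>Im z\<bar> < r \<Longrightarrow> cmod z < r"
  using cmod_le[of z] by simp

theorem proposition7p1:
  shows "\<exists>(U::complex set) (f::complex \<Rightarrow> complex) (g::complex \<Rightarrow> complex) (x::real) (y::real).
    admissible_seed U f \<and> admissible_seed U g \<and> admissible_seed U (\<lambda>z. f z * g z) \<and>
    (\<exists>\<Omega>. burgers_domain U f \<Omega>) \<and> (\<exists>\<Omega>. burgers_domain U g \<Omega>) \<and>
    (\<exists>\<Omega>. burgers_domain U (\<lambda>z. f z * g z) \<Omega>) \<and>
    x \<noteq> 0 \<and> (x, y) \<in> Omega_f U f \<and> (x, y) \<in> Omega_f U g \<and>
    (x, y) \<in> Omega_f U (\<lambda>z. f z * g z) \<and>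
    burgers U (\<lambda>z. f z * g z) x y \<noteq> burgers U f x y * burgers U g x y"
proof -
  define U :: "complex set" where "U = ball 0 1"
  define f :: "complex \<Rightarrow> complex" where "f = (\<lambda>_. \<i>)"
  define g :: "complex \<Rightarrow> complex" where "g = (\<lambda>z. 1 + \<i> + z)"
  have "Im (g z) > 0" "Im (f z * g z) > 0" if "z \<in> U" for z
    using that abs_Re_le_cmod[of z] abs_Im_le_cmod[of z] by (auto simp: U_def f_def g_def)
  then have seeds: "admissible_seed U f" "admissible_seed U g" "admissible_seed U (\<lambda>z. f z * g z)"
    unfolding U_def f_def g_def by (auto intro!: admissible_seed_ball holomorphic_intros)
  have "(\<exists>\<Omega>. burgers_domain U f \<Omega>) \<and> (1/4, 0) \<in> Omega_f U f \<and> burgers U f (1/4) 0 = \<i>"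
    by (rule burgers_affine_seed[where b = 0]) (simp_all add: U_def f_def cmod_less_if_Re_Im)
  moreover have "(\<exists>\<Omega>. burgers_domain U g \<Omega>) \<and> (1/4, 0) \<in> Omega_f U g \<and>
      burgers U g (1/4) 0 = 4 * (1 + \<i>) / 5"
    by (rule burgers_affine_seed[where a = "1 + \<i>" and b = 1])
      (simp_all add: U_def g_def cmod_less_if_Re_Im complex_eq_iff)
  moreover have "(\<exists>\<Omega>. burgers_domain U (\<lambda>z. f z * g z) \<Omega>) \<and> (1/4, 0) \<in> Omega_f U (\<lambda>z. f z * g z) \<and>
      burgers U (\<lambda>z. f z * g z) (1/4) 0 = 4 * (-3 + 5 * \<i>) / 17"
    by (rule burgers_affine_seed[where a = "\<i> - 1" and b = \<i>])
      (simp_all add: U_def f_def g_def cmod_less_if_Re_Im complex_eq_iff algebra_simps)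
  ultimately show ?thesis
    using seeds by (intro exI[of _ U] exI[of _ f] exI[of _ g] exI[of _ "1/4"] exI[of _ 0])
      (auto simp: complex_eq_iff)
qed

end
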